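(* Let $\beta$ be a Pisot number. There exists $N_0=N_0(\beta)\in\mathbb{N}$ such that for every sequence $x_1,x_2,\dots$ of finite words in $X_\beta$ and every $N>N_0$, the infinite concatenation $0^Nx_10^Nx_20^N\cdots$ belongs to $X_\beta$.
   Context: Let $B=\lceil\beta\rceil$ and $T_\beta(x)=\beta x\bmod1$. For $x\in[0,1)$ its greedy $\beta$-expansion is the digit sequence $d_k=\lfloor\beta T_\beta^{k-1}x\rfloor\in\{0,\dots,B-1\}$, $k\ge1$. The $\beta$-shift $X_\beta\subseteq\{0,\dots,B-1\}^{\mathbb{N}}$ is the closure (in the product topology) of the set of greedy $\beta$-expansions of points of $[0,1)$; it is shift-invariant. A finite word is in $X_\beta$ if some element of $X_\beta$ begins with it. $0^N$ denotes the word of $N$ zeros. A Pisot number is an algebraic integer $\beta>1$ whose conjugates have modulus $<1$ (integers $\ge2$ included). *)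

theory Defs
  imports "HOL-Analysis.Analysis" "HOL-Computational_Algebra.Polynomial"
begin

text \<open>Pisot number: an algebraic integer beta > 1 whose conjugates (the other complex roots
  of its minimal polynomial) all have modulus < 1. The minimal polynomial is rendered as a
  monic irreducible integer polynomial vanishing at beta (Gauss: monic irreducible in Z[x]
  is the same as the minimal polynomial over Q).\<close>
definition pisot :: "real \<Rightarrow> bool" where
  "pisot b \<longleftrightarrow> b > 1 \<and>
     (\<exists>p :: int poly. lead_coeff p = 1 \<and> irreducible p \<and>
        poly (map_poly of_int p) b = 0 \<and>
        (\<forall>z::complex. poly (map_poly of_int p) z = 0 \<and> z \<noteq> complex_of_real b \<longrightarrow> cmod z < 1))"

definition beta_T :: "real \<Rightarrow> real \<Rightarrow> real" where
  "beta_T b x = frac (b * x)"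

text \<open>Greedy beta-expansion, 0-indexed: digit k is floor(beta * T^k x)
  (this is d_(k+1) of the paper).\<close>
definition greedy_digits :: "real \<Rightarrow> real \<Rightarrow> nat \<Rightarrow> nat" where
  "greedy_digits b x k = nat \<lfloor>b * (beta_T b ^^ k) x\<rfloor>"

definition beta_shift :: "real \<Rightarrow> (nat \<Rightarrow> nat) set" where
  "beta_shift b = closure (greedy_digits b ` {0..<1})"

definition beta_words :: "real \<Rightarrow> nat list set" where
  "beta_words b = {w. \<exists>s\<in>beta_shift b. \<forall>i<length w. s i = w ! i}"

text \<open>The infinite concatenation 0^N x_0 0^N x_1 0^N ... (for N \<ge> 1 every block is
  nonempty, so the first k+1 blocks have length > k).\<close>
definition zero_sep_concat :: "nat \<Rightarrow> (nat \<Rightarrow> nat list) \<Rightarrow> nat \<Rightarrow> nat" where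
  "zero_sep_concat N xs k = concat (map (\<lambda>i. replicate N 0 @ xs i) [0..<Suc k]) ! k"

end

theory Submission
  imports Defs "Berlekamp_Zassenhaus.Factorize_Int_Poly"
begin

text \<open>For a Pisot number the orbit of 1 under \<open>T\<^sub>\<beta>\<close> is finite: \<open>T\<^sup>j 1 = W\<^sub>j(\<beta>)\<close> for
  integer polynomials \<open>W\<^sub>j\<close> which stay bounded at every root of the minimal polynomial (at \<open>\<beta>\<close>
  because \<open>T\<^sup>j 1 \<in> [0,1]\<close>, at a conjugate \<open>z\<close> because \<open>|z| < 1\<close>), so their remainders modulo
  the minimal polynomial have bounded integer coefficients by Lagrange interpolation.
  Hence the positive points of the orbit of 1 stay above some \<open>\<eta> > 0\<close>.

  Such a gap implies that \<open>T\<^sup>n\<close> maps every cylinder of length \<open>n\<close> onto a set containing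
  \<open>[0, \<eta>)\<close>, while \<open>y / \<beta>\<^sup>N\<close> has \<open>N\<close> leading zero digits, is mapped to \<open>y\<close> by \<open>T\<^sup>N\<close>,
  and lies in \<open>[0, \<eta>)\<close> as soon as \<open>\<beta>\<^sup>N \<ge> 1/\<eta>\<close>. Gluing the blocks \<open>0\<^sup>N x\<^sub>i\<close> from the last
  one backwards realises every prefix of \<open>0\<^sup>N x\<^sub>1 0\<^sup>N x\<^sub>2 \<dots>\<close> as a greedy expansion.\<close>

section \<open>The beta-transformation\<close>

lemma beta_T_eq: "beta_T b x = b * x - of_int \<lfloor>b * x\<rfloor>"
  by (simp add: beta_T_def frac_def)

lemma beta_T_nonneg: "0 \<le> beta_T b x"
  and beta_T_less_1: "beta_T b x < 1"
  by (auto simp: beta_T_def frac_lt_1)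

lemma beta_T_funpow_nonneg: "0 \<le> x \<Longrightarrow> 0 \<le> (beta_T b ^^ m) x"
  by (cases m) (auto simp: beta_T_nonneg)

lemma beta_T_funpow_less_1: "x < 1 \<Longrightarrow> (beta_T b ^^ m) x < 1"
  by (cases m) (auto simp: beta_T_less_1)

lemma beta_T_funpow_one_le_1: "(beta_T b ^^ m) 1 \<le> 1"
  by (cases m) (auto simp: beta_T_less_1 less_imp_le)

lemma beta_T_funpow_le:
  assumes "0 \<le> a" "0 \<le> b"
  shows "(beta_T b ^^ m) a \<le> b ^ m * a"
proof (induction m)
  case (Suc m)
  have "(beta_T b ^^ Suc m) a \<le> b * (beta_T b ^^ m) a"
    using assms beta_T_funpow_nonneg[OF assms(1)] by (simp add: beta_T_eq)
  also have "\<dots> \<le> b * (b ^ m * a)"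
    using Suc assms by (simp add: mult_left_mono)
  finally show ?case by simp
qed simp

lemma beta_T_funpow_zero: "(beta_T b ^^ m) 0 = 0"
  by (induction m) (simp_all add: beta_T_def)

lemma greedy_digits_zero: "greedy_digits b 0 j = 0"
  by (simp add: greedy_digits_def beta_T_funpow_zero)

lemma greedy_digits_funpow: "greedy_digits b x (k + i) = greedy_digits b ((beta_T b ^^ k) x) i"
  by (simp add: greedy_digits_def funpow_add add.commute[of k i])

lemma beta_T_add_small:
  assumes "beta_T b x + b * e \<in> {0..<1}"
  shows "\<lfloor>b * (x + e)\<rfloor> = \<lfloor>b * x\<rfloor>" "beta_T b (x + e) = beta_T b x + b * e"
proof -
  have eq: "b * (x + e) = of_int \<lfloor>b * x\<rfloor> + (beta_T b x + b * e)"
    by (simp add: beta_T_eq algebra_simps)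
  show floor: "\<lfloor>b * (x + e)\<rfloor> = \<lfloor>b * x\<rfloor>"
    unfolding eq using assms by (intro floor_unique) auto
  show "beta_T b (x + e) = beta_T b x + b * e"
    using eq floor by (simp add: beta_T_eq)
qed

lemma beta_T_funpow_perturb:
  assumes b: "b > 0"
    and stays: "\<And>j. j \<le> n \<Longrightarrow> (beta_T b ^^ j) x + \<delta> / b ^ (n - j) \<in> {0..<1}"
  shows "j \<le> n \<Longrightarrow> (beta_T b ^^ j) (x + \<delta> / b ^ n) = (beta_T b ^^ j) x + \<delta> / b ^ (n - j)"
    and "j < n \<Longrightarrow> greedy_digits b (x + \<delta> / b ^ n) j = greedy_digits b x j"
proof -
  have step: "b * (\<delta> / b ^ (n - j)) = \<delta> / b ^ (n - Suc j)" if "j < n" for j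
  proof -
    have "n - j = Suc (n - Suc j)" using that by simp
    then show ?thesis using b by simp
  qed
  have small: "beta_T b ((beta_T b ^^ j) x) + b * (\<delta> / b ^ (n - j)) \<in> {0..<1}" if "j < n" for j
    using stays[of "Suc j"] that unfolding step[OF that] by simp
  show orbit: "(beta_T b ^^ j) (x + \<delta> / b ^ n) = (beta_T b ^^ j) x + \<delta> / b ^ (n - j)"
    if "j \<le> n" for j
    using that
  proof (induction j)
    case (Suc j)
    then have "j < n" by simp
    from Suc have "(beta_T b ^^ Suc j) (x + \<delta> / b ^ n)
        = beta_T b ((beta_T b ^^ j) x + \<delta> / b ^ (n - j))"
      by simp
    also have "\<dots> = (beta_T b ^^ Suc j) x + b * (\<delta> / b ^ (n - j))"
      using beta_T_add_small(2)[OF small[OF \<open>j < n\<close>]] by simp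
    finally show ?case unfolding step[OF \<open>j < n\<close>] .
  qed simp
  show "greedy_digits b (x + \<delta> / b ^ n) j = greedy_digits b x j" if "j < n"
    using beta_T_add_small(1)[OF small[OF that]] orbit[of j] that
    by (simp add: greedy_digits_def)
qed

lemma beta_T_funpow_divide_power:
  assumes "b > 1" "0 \<le> y" "y < 1" "k \<le> N"
  shows "(beta_T b ^^ k) (y / b ^ N) = y / b ^ (N - k)"
    and "k < N \<Longrightarrow> greedy_digits b (y / b ^ N) k = 0"
proof -
  have stays: "(beta_T b ^^ j) 0 + y / b ^ (N - j) \<in> {0..<1}" for j
    using assms by (simp add: beta_T_funpow_zero divide_less_eq less_le_trans[OF _ one_le_power])
  show "(beta_T b ^^ k) (y / b ^ N) = y / b ^ (N - k)"
    using beta_T_funpow_perturb(1)[of b N 0 y k] stays assms by (simp add: beta_T_funpow_zero)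
  show "k < N \<Longrightarrow> greedy_digits b (y / b ^ N) k = 0"
    using beta_T_funpow_perturb(2)[of b N 0 y k] stays assms by (simp add: greedy_digits_zero)
qed

section \<open>Cylinders when the orbit of 1 has a gap\<close>

definition orbit_gap :: "real \<Rightarrow> real \<Rightarrow> bool" where
  "orbit_gap b \<eta> \<longleftrightarrow> 0 < \<eta> \<and> (\<forall>j. 0 < (beta_T b ^^ j) 1 \<longrightarrow> \<eta> \<le> (beta_T b ^^ j) 1)"

text \<open>Induction on \<open>m\<close>: if the first digits of \<open>a\<close> and \<open>T\<^sup>j 1\<close> differ, the gap is at least
  \<open>1 - T a = T\<^sup>0 1 - T a\<close>; otherwise it is \<open>b\<close> times the gap between \<open>T a\<close> and \<open>T\<^sup>j\<^sup>+\<^sup>1 1\<close>.\<close>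

lemma orbit_gap_cylinder_bound:
  assumes gap: "orbit_gap b \<eta>" and b: "b > 1"
  shows "0 \<le> a \<Longrightarrow> a < (beta_T b ^^ j) 1 \<Longrightarrow> \<eta> \<le> b ^ m * ((beta_T b ^^ j) 1 - a) + (beta_T b ^^ m) a"
proof (induction m arbitrary: j a)
  case 0
  then show ?case using gap by (simp add: orbit_gap_def)
next
  case (Suc m)
  define c where "c = (beta_T b ^^ j) 1"
  have "a < c" "0 \<le> a" using Suc.prems by (auto simp: c_def)
  have Ta: "(beta_T b ^^ Suc m) a = (beta_T b ^^ m) (beta_T b a)"
    by (simp add: funpow_Suc_right del: funpow.simps)
  have split: "b ^ Suc m * (c - a)
      = b ^ m * (of_int (\<lfloor>b * c\<rfloor> - \<lfloor>b * a\<rfloor>) + beta_T b c - beta_T b a)"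
    by (simp add: beta_T_eq algebra_simps)
  have "\<lfloor>b * a\<rfloor> \<le> \<lfloor>b * c\<rfloor>" using \<open>a < c\<close> b by (intro floor_mono) simp
  then consider "\<lfloor>b * a\<rfloor> < \<lfloor>b * c\<rfloor>" | "\<lfloor>b * a\<rfloor> = \<lfloor>b * c\<rfloor>" by linarith
  then have "\<eta> \<le> b ^ m * (of_int (\<lfloor>b * c\<rfloor> - \<lfloor>b * a\<rfloor>) + beta_T b c - beta_T b a)
      + (beta_T b ^^ m) (beta_T b a)"
  proof cases
    case 1
    have "1 - beta_T b a \<le> of_int (\<lfloor>b * c\<rfloor> - \<lfloor>b * a\<rfloor>) + beta_T b c - beta_T b a"
      using 1 beta_T_nonneg[of b c] by linarith
    then have "b ^ m * (1 - beta_T b a)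
        \<le> b ^ m * (of_int (\<lfloor>b * c\<rfloor> - \<lfloor>b * a\<rfloor>) + beta_T b c - beta_T b a)"
      using b by (simp add: mult_left_mono)
    moreover have "\<eta> \<le> b ^ m * (1 - beta_T b a) + (beta_T b ^^ m) (beta_T b a)"
      using Suc.IH[of "beta_T b a" 0] beta_T_nonneg beta_T_less_1 by simp
    ultimately show ?thesis by linarith
  next
    case 2
    have "beta_T b a < beta_T b c" using \<open>a < c\<close> b 2 by (simp add: beta_T_eq)
    then show ?thesis
      using Suc.IH[of "beta_T b a" "Suc j"] 2 beta_T_nonneg by (simp add: c_def)
  qed
  then show ?case by (simp only: c_def[symmetric] Ta split)
qed

lemma orbit_gap_cylinder_window:
  assumes gap: "orbit_gap b \<eta>" and b: "b > 1"
    and a: "0 \<le> a" "a < 1" and t: "0 \<le> t" "t < \<eta>"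
  shows "a + (t - (beta_T b ^^ m) a) / b ^ m \<in> {0..<1}"
proof -
  have bm: "b ^ m > 0" using b by simp
  have "(beta_T b ^^ m) a / b ^ m \<le> a"
    using beta_T_funpow_le[of a b m] a b bm by (simp add: divide_le_eq mult.commute)
  moreover have "0 \<le> t / b ^ m" using t bm by simp
  moreover have "t - (beta_T b ^^ m) a < b ^ m * (1 - a)"
    using orbit_gap_cylinder_bound[OF gap b, of a 0 m] a t by simp
  then have "(t - (beta_T b ^^ m) a) / b ^ m < 1 - a"
    using bm by (simp add: divide_less_eq mult.commute)
  ultimately show ?thesis by (simp add: diff_divide_distrib)
qed

lemma orbit_gap_cylinder_onto:
  assumes gap: "orbit_gap b \<eta>" and b: "b > 1"
    and x: "0 \<le> x" "x < 1" and t: "0 \<le> t" "t < \<eta>"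
  obtains y where "0 \<le> y" "y < 1" "\<And>j. j < n \<Longrightarrow> greedy_digits b y j = greedy_digits b x j"
    "(beta_T b ^^ n) y = t"
proof -
  define \<delta> where "\<delta> = t - (beta_T b ^^ n) x"
  have stays: "(beta_T b ^^ j) x + \<delta> / b ^ (n - j) \<in> {0..<1}" if "j \<le> n" for j
  proof -
    have "(beta_T b ^^ n) x = (beta_T b ^^ (n - j)) ((beta_T b ^^ j) x)"
      using that by (metis funpow_add comp_apply le_add_diff_inverse2)
    then show ?thesis
      using orbit_gap_cylinder_window[OF gap b _ _ t] beta_T_funpow_nonneg[OF x(1)]
        beta_T_funpow_less_1[OF x(2)] by (simp add: \<delta>_def)
  qed
  note perturb = beta_T_funpow_perturb[of b n x \<delta>, OF _ stays]
  show ?thesis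
  proof
    show "0 \<le> x + \<delta> / b ^ n" "x + \<delta> / b ^ n < 1" using stays[of 0] by simp_all
    show "greedy_digits b (x + \<delta> / b ^ n) j = greedy_digits b x j" if "j < n" for j
      using perturb(2) b that by simp
    show "(beta_T b ^^ n) (x + \<delta> / b ^ n) = t"
      using perturb(1)[of n] b by (simp add: \<delta>_def)
  qed
qed

section \<open>Realising zero-padded concatenations\<close>

definition greedy_words :: "real \<Rightarrow> nat list set" where
  "greedy_words b = {w. \<exists>x. 0 \<le> x \<and> x < 1 \<and> (\<forall>i<length w. greedy_digits b x i = w ! i)}"

lemma in_closure_iff_prefixes:
  fixes S :: "(nat \<Rightarrow> 'a::discrete_topology) set"
  shows "s \<in> closure S \<longleftrightarrow> (\<forall>k. \<exists>t\<in>S. \<forall>i<k. t i = s i)"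
proof
  assume s: "s \<in> closure S"
  show "\<forall>k. \<exists>t\<in>S. \<forall>i<k. t i = s i"
  proof
    fix k
    define X where "X i = (if i < k then {s i} else UNIV)" for i
    have "open (Pi\<^sub>E UNIV X)"
      by (rule open_PiE) (auto simp: X_def open_discrete)
    moreover have "s \<in> Pi\<^sub>E UNIV X" by (auto simp: X_def)
    ultimately obtain t where "t \<in> S" "t \<in> Pi\<^sub>E UNIV X"
      using s open_Int_closure_eq_empty by blast
    then show "\<exists>t\<in>S. \<forall>i<k. t i = s i"
      by (auto simp: X_def PiE_iff split: if_splits)
  qed
next
  assume H: "\<forall>k. \<exists>t\<in>S. \<forall>i<k. t i = s i"
  show "s \<in> closure S"
    unfolding closure_iff_nhds_not_empty
  proof (intro allI impI)
    fix A U assume "U \<subseteq> A" "open U" "s \<in> U"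
    then have "openin (product_topology (\<lambda>i. euclidean) UNIV) U" by (simp add: open_fun_def)
    from product_topology_open_contains_basis[OF this \<open>s \<in> U\<close>] obtain X where
      X: "s \<in> Pi\<^sub>E UNIV X" "finite {i. X i \<noteq> UNIV}" "Pi\<^sub>E UNIV X \<subseteq> U"
      by auto
    obtain k where k: "{i. X i \<noteq> UNIV} \<subseteq> {..<k}" using finite_nat_bounded[OF X(2)] by blast
    obtain t where t: "t \<in> S" "\<forall>i<k. t i = s i" using H by blast
    have "t \<in> Pi\<^sub>E UNIV X"
      using X(1) k t(2) by (force simp: PiE_iff)
    then show "S \<inter> A \<noteq> {}" using t(1) X(3) \<open>U \<subseteq> A\<close> by blast
  qed
qed

lemma beta_words_subset_greedy_words: "beta_words b \<subseteq> greedy_words b"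
proof
  fix w assume "w \<in> beta_words b"
  then obtain s where s: "s \<in> closure (greedy_digits b ` {0..<1})" "\<forall>i<length w. s i = w ! i"
    by (auto simp: beta_words_def beta_shift_def)
  then obtain t where "t \<in> greedy_digits b ` {0..<1}" "\<forall>i<length w. t i = s i"
    unfolding in_closure_iff_prefixes by blast
  with s(2) show "w \<in> greedy_words b" by (auto simp: greedy_words_def)
qed

definition padded_concat :: "nat \<Rightarrow> nat list list \<Rightarrow> nat list" where
  "padded_concat N ws = concat (map (\<lambda>w. replicate N 0 @ w) ws)"

lemma padded_concat_simps [simp]:
  "padded_concat N [] = []"
  "padded_concat N (w # ws) = replicate N 0 @ w @ padded_concat N ws"
  "padded_concat N (ws @ vs) = padded_concat N ws @ padded_concat N vs"
  by (simp_all add: padded_concat_def)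

lemma length_padded_concat_ge: "N * length ws \<le> length (padded_concat N ws)"
  by (induction ws) auto

text \<open>One block \<open>0\<^sup>N w\<close> in front of a point \<open>t\<close> of the gap: \<open>z = y / b\<^sup>N\<close>, where \<open>y\<close> lies in the
  cylinder of \<open>w\<close> and \<open>T\<^sup>|\<^sup>w\<^sup>| y = t\<close>.\<close>

lemma orbit_gap_block:
  assumes gap: "orbit_gap b \<eta>" and b: "b > 1" and N: "1 \<le> \<eta> * b ^ N"
    and w: "w \<in> greedy_words b" and t: "0 \<le> t" "t < \<eta>"
  obtains z where "0 \<le> z" "z < \<eta>"
    "\<And>i. i < N + length w \<Longrightarrow> greedy_digits b z i = (replicate N 0 @ w) ! i"
    "(beta_T b ^^ (N + length w)) z = t"
proof -
  obtain x where x: "0 \<le> x" "x < 1" "\<forall>i<length w. greedy_digits b x i = w ! i"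
    using w by (auto simp: greedy_words_def)
  obtain y where y: "0 \<le> y" "y < 1" "\<And>j. j < length w \<Longrightarrow> greedy_digits b y j = w ! j"
    "(beta_T b ^^ length w) y = t"
    using orbit_gap_cylinder_onto[OF gap b x(1,2) t, of "length w"] x(3) by metis
  define z where "z = y / b ^ N"
  have bN: "b ^ N > 0" using b by simp
  have TN: "(beta_T b ^^ N) z = y"
    using beta_T_funpow_divide_power(1)[OF b y(1,2), of N N] by (simp add: z_def)
  show ?thesis
  proof
    show "0 \<le> z" using y(1) bN by (simp add: z_def)
    have "z < 1 / b ^ N" using y(2) bN by (simp add: z_def divide_strict_right_mono)
    also have "\<dots> \<le> \<eta>" using N bN by (simp add: divide_le_eq)
    finally show "z < \<eta>" .
    show "(beta_T b ^^ (N + length w)) z = t"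
      using TN y(4) by (simp add: funpow_add add.commute[of N])
    fix i assume "i < N + length w"
    then consider "i < N" | r where "i = N + r" "r < length w"
      by (metis add_diff_inverse_nat nat_add_left_cancel_less)
    then show "greedy_digits b z i = (replicate N 0 @ w) ! i"
    proof cases
      case 1
      then show ?thesis
        using beta_T_funpow_divide_power(2)[OF b y(1,2)] by (simp add: z_def nth_append)
    next
      case (2 r)
      then show ?thesis using y(3) by (simp add: greedy_digits_funpow TN nth_append)
    qed
  qed
qed

lemma orbit_gap_padded_concat:
  assumes gap: "orbit_gap b \<eta>" and b: "b > 1" and N: "1 \<le> \<eta> * b ^ N"
    and ws: "set ws \<subseteq> greedy_words b" and t: "0 \<le> t" "t < \<eta>"
  shows "\<exists>z. 0 \<le> z \<and> z < \<eta> \<and>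
      (\<forall>i<length (padded_concat N ws). greedy_digits b z i = padded_concat N ws ! i) \<and>
      (beta_T b ^^ length (padded_concat N ws)) z = t"
  using ws t
proof (induction ws arbitrary: t)
  case (Cons w ws)
  define C where "C = padded_concat N ws"
  obtain z' where z': "0 \<le> z'" "z' < \<eta>" "\<forall>i<length C. greedy_digits b z' i = C ! i"
    "(beta_T b ^^ length C) z' = t"
    using Cons by (auto simp: C_def)
  obtain z where z: "0 \<le> z" "z < \<eta>"
    "\<And>i. i < N + length w \<Longrightarrow> greedy_digits b z i = (replicate N 0 @ w) ! i"
    "(beta_T b ^^ (N + length w)) z = z'"
    using orbit_gap_block[OF gap b N _ z'(1,2), of w] Cons.prems by auto
  have "greedy_digits b z i = ((replicate N 0 @ w) @ C) ! i"
    if i: "i < length ((replicate N 0 @ w) @ C)" for i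
  proof (cases "i < N + length w")
    case True
    then show ?thesis using z(3) by (simp add: nth_append_left del: append_assoc)
  next
    case False
    then obtain s where "i = (N + length w) + s" using le_Suc_ex not_le by blast
    then show ?thesis
      using z'(3) z(4) i by (simp add: greedy_digits_funpow nth_append_right del: append_assoc)
  qed
  moreover have "length ((replicate N 0 @ w) @ C) = length C + (N + length w)" by simp
  then have "(beta_T b ^^ length ((replicate N 0 @ w) @ C)) z = t"
    using z(4) z'(4) by (simp only: funpow_add comp_apply)
  ultimately show ?case using z(1,2) by (auto simp: C_def)
qed auto

lemma zero_sep_concat_eq_padded_concat:
  assumes "0 < N" "i \<le> k"
  shows "i < length (padded_concat N (map xs [0..<Suc k]))"
    and "zero_sep_concat N xs i = padded_concat N (map xs [0..<Suc k]) ! i"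
proof -
  have split: "[0..<Suc k] = [0..<Suc i] @ [Suc i..<Suc k]"
    using upt_add_eq_append[of 0 "Suc i" "k - i"] assms(2) by simp
  have "i < N * length (map xs [0..<Suc i])" using assms(1) by (cases N) auto
  also have "\<dots> \<le> length (padded_concat N (map xs [0..<Suc i]))"
    by (rule length_padded_concat_ge)
  finally have i: "i < length (padded_concat N (map xs [0..<Suc i]))" .
  then show "i < length (padded_concat N (map xs [0..<Suc k]))"
    unfolding split by simp
  have "zero_sep_concat N xs i = padded_concat N (map xs [0..<Suc i]) ! i"
    by (simp add: zero_sep_concat_def padded_concat_def o_def)
  also have "\<dots> = padded_concat N (map xs [0..<Suc k]) ! i"
    unfolding split map_append padded_concat_simps(3) by (simp only: nth_append i if_True)
  finally show "zero_sep_concat N xs i = padded_concat N (map xs [0..<Suc k]) ! i" .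
qed

theorem orbit_gap_zero_sep_concat_in_beta_shift:
  assumes gap: "orbit_gap b \<eta>" and b: "b > 1" and N: "0 < N" "1 \<le> \<eta> * b ^ N"
    and xs: "\<forall>i. xs i \<in> beta_words b"
  shows "zero_sep_concat N xs \<in> beta_shift b"
  unfolding beta_shift_def in_closure_iff_prefixes
proof
  fix k
  define w where "w = padded_concat N (map xs [0..<Suc k])"
  have ws: "set (map xs [0..<Suc k]) \<subseteq> greedy_words b"
    using xs beta_words_subset_greedy_words by auto
  have "0 < \<eta>" using gap by (simp add: orbit_gap_def)
  then obtain z where z: "0 \<le> z" "z < \<eta>" "\<forall>i<length w. greedy_digits b z i = w ! i"
    using orbit_gap_padded_concat[OF gap b N(2) ws, of 0] unfolding w_def by auto
  have "\<eta> \<le> 1" using gap by (auto simp: orbit_gap_def dest: spec[of _ 0])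
  then have "greedy_digits b z \<in> greedy_digits b ` {0..<1}" using z by auto
  moreover have "greedy_digits b z i = zero_sep_concat N xs i" if "i < k" for i
    using zero_sep_concat_eq_padded_concat[OF N(1), of i k xs] z(3) that by (simp add: w_def)
  ultimately show "\<exists>t\<in>greedy_digits b ` {0..<1}. \<forall>i<k. t i = zero_sep_concat N xs i"
    by blast
qed

section \<open>The orbit of 1 under a Pisot number is finite\<close>

text \<open>\<open>T\<^sup>j 1 = W\<^sub>j(\<beta>)\<close> where \<open>W\<^sub>0 = 1\<close> and \<open>W\<^sub>j\<^sub>+\<^sub>1(z) = z W\<^sub>j(z) - d\<^sub>j\<^sub>+\<^sub>1\<close> with \<open>d\<^sub>j\<^sub>+\<^sub>1\<close> the digits of 1;
  \<open>orbit_value b z j\<close> is \<open>W\<^sub>j(z)\<close>.\<close>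

fun orbit_value :: "real \<Rightarrow> complex \<Rightarrow> nat \<Rightarrow> complex" where
  "orbit_value b z 0 = 1"
| "orbit_value b z (Suc j) = z * orbit_value b z j - of_int \<lfloor>b * (beta_T b ^^ j) 1\<rfloor>"

lemma orbit_value_beta: "orbit_value b (of_real b) j = of_real ((beta_T b ^^ j) 1)"
proof (induction j)
  case (Suc j)
  then show ?case using beta_T_eq[of b "(beta_T b ^^ j) 1"] by simp
qed simp

lemma norm_orbit_value_le:
  assumes b: "b > 1" and z: "cmod z < 1"
  shows "cmod (orbit_value b z j) \<le> 1 + b / (1 - cmod z)"
proof (induction j)
  case (Suc j)
  define M where "M = 1 + b / (1 - cmod z)"
  have "0 \<le> b * (beta_T b ^^ j) 1" "b * (beta_T b ^^ j) 1 \<le> b"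
    using b beta_T_funpow_nonneg[OF zero_le_one, of j b] beta_T_funpow_one_le_1[of j b]
    by (simp_all add: mult_left_le)
  then have digit: "cmod (of_int \<lfloor>b * (beta_T b ^^ j) 1\<rfloor> :: complex) \<le> b"
    by (simp add: abs_of_nonneg) (meson of_int_floor_le order_trans)
  have "cmod (orbit_value b z (Suc j)) \<le> cmod z * cmod (orbit_value b z j) + b"
    using digit norm_triangle_ineq4[of "z * orbit_value b z j" "of_int \<lfloor>b * (beta_T b ^^ j) 1\<rfloor>"]
    by (simp add: norm_mult)
  also have "\<dots> \<le> cmod z * M + b" using Suc by (simp add: M_def mult_left_mono)
  also have "\<dots> = M - (1 - cmod z)" using z by (simp add: M_def field_simps)
  finally show ?case using z by (simp add: M_def)
qed (use b z in simp)

lemma orbit_value_uniformly_bounded: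
  assumes b: "b > 1" and Z: "finite Z" "\<forall>z\<in>Z. z = of_real b \<or> cmod z < 1"
  shows "\<exists>M. \<forall>z\<in>Z. \<forall>j. cmod (orbit_value b z j) \<le> M"
proof -
  define B where "B z = (if z = of_real b then 1 else 1 + b / (1 - cmod z))" for z
  have "cmod (orbit_value b z j) \<le> B z" if "z \<in> Z" for z j
    using Z(2) that norm_orbit_value_le[OF b]
      beta_T_funpow_nonneg[OF zero_le_one, of j b] beta_T_funpow_one_le_1[of j b]
    by (auto simp: B_def orbit_value_beta)
  also have "B z \<le> Max (B ` Z)" if "z \<in> Z" for z using Z(1) that by simp
  finally show ?thesis by blast
qed

text \<open>Polynomial division by the monic \<open>p\<close>, carried out along the recursion of \<open>W\<^sub>j\<close>.\<close>

lemma orbit_value_remainder: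
  fixes p :: "int poly"
  assumes lc: "lead_coeff p = 1" and d: "degree p \<ge> 1"
  shows "\<exists>q::int poly. degree q < degree p \<and>
     (\<forall>z. poly (map_poly of_int p) z = 0 \<longrightarrow> poly (map_poly of_int q) z = orbit_value b z j)"
proof (induction j)
  case 0
  show ?case by (intro exI[of _ 1]) (use d in auto)
next
  case (Suc j)
  then obtain q where q: "degree q < degree p"
    "\<forall>z. poly (map_poly of_int p) z = 0 \<longrightarrow> poly (map_poly of_int q) z = orbit_value b z j"
    by blast
  define q1 where "q1 = pCons 0 q - [:\<lfloor>b * (beta_T b ^^ j) 1\<rfloor>:]"
  define q2 where "q2 = q1 - Polynomial.smult (poly.coeff q1 (degree p)) p"
  have "degree (pCons 0 q) \<le> degree p" using q(1) by (cases "q = 0") auto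
  then have "degree q1 \<le> degree p" unfolding q1_def by (intro degree_diff_le) auto
  then have "degree q2 \<le> degree p" unfolding q2_def
    by (meson degree_diff_le degree_smult_le order.trans)
  moreover have "degree q2 \<noteq> degree p"
  proof
    assume "degree q2 = degree p"
    moreover have "poly.coeff q2 (degree p) = 0" using lc by (simp add: q2_def)
    ultimately have "q2 = 0" by (metis leading_coeff_0_iff)
    with \<open>degree q2 = degree p\<close> d show False by simp
  qed
  ultimately have "degree q2 < degree p" by simp
  moreover have "poly (map_poly of_int q2) z = orbit_value b z (Suc j)"
    if "poly (map_poly of_int p) z = 0" for z :: complex
    using q(2) that by (simp add: q2_def q1_def hom_distribs)
  ultimately show ?case by blast
qed

definition lagrange_basis :: "'a::field set \<Rightarrow> 'a \<Rightarrow> 'a poly" where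
  "lagrange_basis Z z = Polynomial.smult (1 / (\<Prod>w\<in>Z-{z}. z - w)) (\<Prod>w\<in>Z-{z}. [:-w, 1:])"

lemma degree_lagrange_basis:
  assumes "finite Z" "z \<in> Z"
  shows "degree (lagrange_basis Z z) \<le> card Z - 1"
proof -
  have "degree (lagrange_basis Z z) \<le> degree (\<Prod>w\<in>Z-{z}. [:-w, 1:])"
    unfolding lagrange_basis_def by (rule degree_smult_le)
  also have "\<dots> \<le> sum (degree \<circ> (\<lambda>w. [:-w, 1:])) (Z - {z})"
    using assms by (intro degree_prod_sum_le) auto
  finally show ?thesis using assms by simp
qed

lemma poly_lagrange_basis:
  assumes "finite Z" "z \<in> Z" "u \<in> Z"
  shows "poly (lagrange_basis Z z) u = (if u = z then 1 else 0)"
  using assms by (auto simp: lagrange_basis_def poly_prod prod_zero_iff)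

lemma lagrange_interpolation:
  assumes fin: "finite Z" and dq: "degree q < card Z"
  shows "q = (\<Sum>z\<in>Z. Polynomial.smult (poly q z) (lagrange_basis Z z))"
proof -
  define D where "D = q - (\<Sum>z\<in>Z. Polynomial.smult (poly q z) (lagrange_basis Z z))"
  have "degree (\<Sum>z\<in>Z. Polynomial.smult (poly q z) (lagrange_basis Z z)) \<le> card Z - 1"
    using degree_lagrange_basis fin
    by (intro degree_sum_le) (auto intro: order.trans[OF degree_smult_le])
  then have "degree D \<le> card Z - 1" unfolding D_def using dq by (intro degree_diff_le) auto
  then have "degree D < card Z" using dq by linarith
  moreover have "Z \<subseteq> {u. poly D u = 0}"
  proof
    fix u assume u: "u \<in> Z"
    have "(\<Sum>z\<in>Z. poly q z * poly (lagrange_basis Z z) u) = (\<Sum>z\<in>Z. if z = u then poly q z else 0)"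
      using poly_lagrange_basis[OF fin _ u] by (intro sum.cong) auto
    then show "u \<in> {u. poly D u = 0}" using fin u by (simp add: D_def poly_sum)
  qed
  ultimately have "D = 0"
    using card_poly_roots_bound card_mono poly_roots_finite by (metis leD order_trans)
  then show ?thesis by (simp add: D_def)
qed

lemma lagrange_coeff_bound:
  fixes Z :: "'a::real_normed_field set"
  assumes fin: "finite Z"
  shows "\<exists>C. \<forall>q. degree q < card Z \<longrightarrow> (\<forall>z\<in>Z. norm (poly q z) \<le> M)
           \<longrightarrow> (\<forall>i. norm (poly.coeff q i) \<le> C)"
proof -
  define C where
    "C = max 0 M * (\<Sum>i<card Z. \<Sum>z\<in>Z. norm (poly.coeff (lagrange_basis Z z) i))"
  have "norm (poly.coeff q i) \<le> C"
    if dq: "degree q < card Z" and bd: "\<forall>z\<in>Z. norm (poly q z) \<le> M" for q i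
  proof (cases "i < card Z")
    case True
    have "norm (poly.coeff q i) = norm (\<Sum>z\<in>Z. poly q z * poly.coeff (lagrange_basis Z z) i)"
      by (subst lagrange_interpolation[OF fin dq]) (simp add: coeff_sum)
    also have "\<dots> \<le> (\<Sum>z\<in>Z. max 0 M * norm (poly.coeff (lagrange_basis Z z) i))"
      using bd by (intro order.trans[OF norm_sum] sum_mono)
        (auto simp: norm_mult intro!: mult_right_mono intro: order.trans[OF _ max.cobounded2])
    also have "\<dots> \<le> C"
      unfolding C_def sum_distrib_left[symmetric] using True fin
      by (intro mult_left_mono member_le_sum sum_nonneg) auto
    finally show ?thesis .
  qed (use dq in \<open>simp add: coeff_eq_0 C_def sum_nonneg\<close>)
  then show ?thesis by blast
qed

lemma finite_int_polys_bounded_coeffs: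
  "finite {q::int poly. degree q < d \<and> (\<forall>i. \<bar>poly.coeff q i\<bar> \<le> C)}"
proof -
  have "{q::int poly. degree q < d \<and> (\<forall>i. \<bar>poly.coeff q i\<bar> \<le> C)}
        \<subseteq> Poly ` {xs. set xs \<subseteq> {-C..C} \<and> length xs \<le> d}"
  proof
    fix q :: "int poly" assume q: "q \<in> {q. degree q < d \<and> (\<forall>i. \<bar>poly.coeff q i\<bar> \<le> C)}"
    then have "range (poly.coeff q) \<subseteq> {-C..C}" by (auto simp: abs_le_iff) (smt (verit))
    then have "set (coeffs q) \<subseteq> {-C..C}" by (simp add: range_coeff)
    moreover have "length (coeffs q) \<le> d" using q by (cases "q = 0") (auto simp: length_coeffs)
    ultimately show "q \<in> Poly ` {xs. set xs \<subseteq> {-C..C} \<and> length xs \<le> d}"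
      by (intro image_eqI[of _ _ "coeffs q"]) auto
  qed
  moreover have "finite {xs. set xs \<subseteq> {-C..C} \<and> length xs \<le> d}"
    by (intro finite_lists_length_le) auto
  ultimately show ?thesis using finite_subset by blast
qed

lemma finite_int_polys_bounded_on:
  fixes Z :: "complex set"
  assumes "finite Z"
  shows "finite {q::int poly. degree q < card Z \<and> (\<forall>z\<in>Z. cmod (poly (map_poly of_int q) z) \<le> M)}"
proof -
  obtain C where C: "\<And>q. degree q < card Z \<Longrightarrow> \<forall>z\<in>Z. cmod (poly q z) \<le> M
      \<Longrightarrow> \<forall>i. cmod (poly.coeff q i) \<le> C"
    using lagrange_coeff_bound[OF assms] by blast
  have "\<forall>i. \<bar>poly.coeff q i\<bar> \<le> \<lfloor>C\<rfloor>"
    if "degree q < card Z" "\<forall>z\<in>Z. cmod (poly (map_poly of_int q) z) \<le> M" for q :: "int poly"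
    using C[of "map_poly of_int q"] that by (simp add: le_floor_iff)
  then have "{q::int poly. degree q < card Z \<and> (\<forall>z\<in>Z. cmod (poly (map_poly of_int q) z) \<le> M)}
      \<subseteq> {q. degree q < card Z \<and> (\<forall>i. \<bar>poly.coeff q i\<bar> \<le> \<lfloor>C\<rfloor>)}"
    by blast
  then show ?thesis using finite_int_polys_bounded_coeffs finite_subset by blast
qed

lemma rsquarefree_of_int_irreducible:
  assumes "irreducible (p::int poly)"
  shows "rsquarefree (map_poly (of_int :: int \<Rightarrow> complex) p)"
proof -
  interpret h: field_hom_0' "of_rat :: rat \<Rightarrow> complex" by unfold_locales auto
  have "square_free (map_poly rat_of_int p)"
    using square_free_int_rat irreducible_imp_square_free assms by blast
  then have "square_free (map_poly (of_rat :: rat \<Rightarrow> complex) (map_poly rat_of_int p))"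
    by (simp add: h.square_free_map_poly)
  also have "map_poly (of_rat :: rat \<Rightarrow> complex) (map_poly rat_of_int p) = map_poly of_int p"
    by (subst map_poly_map_poly) (auto simp: o_def)
  finally show ?thesis by (rule square_free_rsquarefree)
qed

lemma card_roots_rsquarefree:
  assumes "rsquarefree (P :: complex poly)"
  shows "card {z. poly P z = 0} = degree P"
proof -
  have "P \<noteq> 0" using assms by (simp add: rsquarefree_def)
  have "degree P = degree (Polynomial.smult (lead_coeff P) (\<Prod>z|poly P z = 0. [:-z, 1:]))"
    by (simp only: complex_poly_decompose_rsquarefree[OF assms])
  also have "\<dots> = degree (\<Prod>z|poly P z = 0. [:-z, 1:])"
    using \<open>P \<noteq> 0\<close> by simp
  also have "\<dots> = card {z. poly P z = 0}"
    by (subst degree_prod_sum_eq) auto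
  finally show ?thesis by simp
qed

lemma pisot_orbit_one_finite:
  assumes "pisot b"
  shows "finite (range (\<lambda>j. (beta_T b ^^ j) 1))"
proof -
  from assms obtain p :: "int poly" where b: "b > 1" and lc: "lead_coeff p = 1"
    and irr: "irreducible p" and root: "poly (map_poly of_int p) b = 0"
    and conj: "\<forall>z::complex. poly (map_poly of_int p) z = 0 \<and> z \<noteq> of_real b \<longrightarrow> cmod z < 1"
    unfolding pisot_def by blast
  define Z where "Z = {z. poly (map_poly (of_int :: int \<Rightarrow> complex) p) z = 0}"
  have "p \<noteq> 0" using lc by auto
  then have finZ: "finite Z" unfolding Z_def by (intro poly_roots_finite) simp
  have "map_poly (of_int :: int \<Rightarrow> complex) p = map_poly of_real (map_poly of_int p)"
    by (simp add: map_poly_map_poly o_def)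
  then have bZ: "of_real b \<in> Z"
    using root by (simp add: Z_def of_real_hom.poly_map_poly)
  have cardZ: "card Z = degree p"
    using card_roots_rsquarefree[OF rsquarefree_of_int_irreducible[OF irr]] by (simp add: Z_def)
  then have "degree p \<ge> 1" using finZ bZ by (metis One_nat_def Suc_leI card_gt_0_iff empty_iff)
  obtain M where M: "\<forall>z\<in>Z. \<forall>j. cmod (orbit_value b z j) \<le> M"
    using orbit_value_uniformly_bounded[OF b finZ] conj by (auto simp: Z_def)
  define S where
    "S = {q::int poly. degree q < card Z \<and> (\<forall>z\<in>Z. cmod (poly (map_poly of_int q) z) \<le> M)}"
  have "range (\<lambda>j. (beta_T b ^^ j) 1) \<subseteq> (\<lambda>q. Re (poly (map_poly of_int q) (of_real b))) ` S"
  proof clarify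
    fix j
    obtain q :: "int poly" where q: "degree q < degree p"
      "\<forall>z\<in>Z. poly (map_poly of_int q) z = orbit_value b z j"
      using orbit_value_remainder[OF lc \<open>degree p \<ge> 1\<close>] unfolding Z_def by blast
    then have "q \<in> S" using M cardZ by (simp add: S_def)
    moreover have "(beta_T b ^^ j) 1 = Re (poly (map_poly of_int q) (of_real b))"
      using q(2) bZ by (simp add: orbit_value_beta)
    ultimately show "(beta_T b ^^ j) 1 \<in> (\<lambda>q. Re (poly (map_poly of_int q) (of_real b))) ` S"
      by blast
  qed
  moreover have "finite S" unfolding S_def using finZ by (rule finite_int_polys_bounded_on)
  ultimately show ?thesis using finite_subset by blast
qed

lemma finite_orbit_imp_orbit_gap:
  assumes "finite (range (\<lambda>j. (beta_T b ^^ j) 1))"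
  shows "\<exists>\<eta>. orbit_gap b \<eta>"
proof -
  define P where "P = {x \<in> range (\<lambda>j. (beta_T b ^^ j) 1). 0 < x}"
  have "finite P" "1 \<in> P" using assms by (auto simp: P_def intro: range_eqI[of _ _ 0])
  then have "Min P \<in> P" "\<forall>x\<in>P. Min P \<le> x" using Min_in by auto
  then have "orbit_gap b (Min P)" by (auto simp: orbit_gap_def P_def)
  then show ?thesis ..
qed

theorem lemma6p1:
  fixes \<beta> :: real
  assumes "pisot \<beta>"
  shows "\<exists>N0::nat. \<forall>(xs :: nat \<Rightarrow> nat list) (N::nat).
           (\<forall>i. xs i \<in> beta_words \<beta>) \<longrightarrow> N > N0 \<longrightarrow> zero_sep_concat N xs \<in> beta_shift \<beta>"
proof -
  have b: "\<beta> > 1" using assms by (simp add: pisot_def)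
  obtain \<eta> where gap: "orbit_gap \<beta> \<eta>"
    using finite_orbit_imp_orbit_gap[OF pisot_orbit_one_finite[OF assms]] by blast
  then have "\<eta> > 0" by (simp add: orbit_gap_def)
  obtain N0 where N0: "1 / \<eta> < \<beta> ^ N0" using real_arch_pow[OF b] by blast
  have "1 \<le> \<eta> * \<beta> ^ N" if "N0 < N" for N
  proof -
    have "1 < \<eta> * \<beta> ^ N0" using N0 \<open>\<eta> > 0\<close> by (simp add: divide_less_eq mult.commute)
    also have "\<dots> \<le> \<eta> * \<beta> ^ N" using that b \<open>\<eta> > 0\<close> by (simp add: power_increasing)
    finally show ?thesis by simp
  qed
  then show ?thesis
    using orbit_gap_zero_sep_concat_in_beta_shift[OF gap b] by (metis gr_implies_not0 neq0_conv)
qed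

end
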